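(* Both the randomized and the deterministic query complexity of $TARSKI(2,k)$ are $\Theta(k)$; that is, there are constants $0<c_1\le c_2$ such that for every $k\in\mathbb{N}$, each of these complexities lies between $c_1 k$ and $c_2 k$.
   Context: $TARSKI(2,k)$: given oracle access to an unknown monotone function $f:\{0,1\}^k\to\{0,1\}^k$ (monotone with respect to the componentwise order: $a\le b$ iff $a_i\le b_i$ for all $i$, implies $f(a)\le f(b)$), where a query of $v$ returns $f(v)$, find $x$ with $f(x)=x$. The deterministic query complexity is the minimum over deterministic algorithms always finding a fixed point of the worst-case number of queries. The randomized query complexity is the minimum, over randomized algorithms that on every input output a fixed point with probability at least $9/10$, of the worst-case expected number of queries (expectation over the algorithm's coins). *)

theory Defs
  imports "HOL-Probability.Probability"
begin

definition cube :: "nat \<Rightarrow> bool list set" where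
  "cube k = {x. length x = k}"

definition leq_cw :: "bool list \<Rightarrow> bool list \<Rightarrow> bool" where
  "leq_cw a b \<longleftrightarrow> list_all2 (\<le>) a b"

definition tarski_instances :: "nat \<Rightarrow> (bool list \<Rightarrow> bool list) set" where
  "tarski_instances k = {f. (\<forall>x\<in>cube k. f x \<in> cube k) \<and>
      (\<forall>a\<in>cube k. \<forall>b\<in>cube k. leq_cw a b \<longrightarrow> leq_cw (f a) (f b))}"

definition is_fixed_point :: "nat \<Rightarrow> (bool list \<Rightarrow> bool list) \<Rightarrow> bool list \<Rightarrow> bool" where
  "is_fixed_point k f x \<longleftrightarrow> x \<in> cube k \<and> f x = x"

text \<open>Deterministic query algorithms = decision trees: either output a point,
  or query a point and continue depending on the answer.\<close>
datatype 'a qtree = Leaf 'a | Query 'a "'a \<Rightarrow> 'a qtree"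

primrec run_output :: "'a qtree \<Rightarrow> ('a \<Rightarrow> 'a) \<Rightarrow> 'a" where
  "run_output (Leaf x) f = x"
| "run_output (Query v t) f = run_output (t (f v)) f"

primrec run_queries :: "'a qtree \<Rightarrow> ('a \<Rightarrow> 'a) \<Rightarrow> nat" where
  "run_queries (Leaf x) f = 0"
| "run_queries (Query v t) f = Suc (run_queries (t (f v)) f)"

definition det_correct :: "nat \<Rightarrow> bool list qtree \<Rightarrow> bool" where
  "det_correct k T \<longleftrightarrow> (\<forall>f\<in>tarski_instances k. is_fixed_point k f (run_output T f))"

definition det_query_complexity :: "nat \<Rightarrow> ennreal" where
  "det_query_complexity k =
     (INF T\<in>{T. det_correct k T}. SUP f\<in>tarski_instances k. of_nat (run_queries T f))"

definition rand_correct :: "nat \<Rightarrow> bool list qtree pmf \<Rightarrow> bool" where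
  "rand_correct k A \<longleftrightarrow> (\<forall>f\<in>tarski_instances k.
      measure_pmf.prob A {T. is_fixed_point k f (run_output T f)} \<ge> 9/10)"

definition rand_query_complexity :: "nat \<Rightarrow> ennreal" where
  "rand_query_complexity k =
     (INF A\<in>{A. rand_correct k A}. SUP f\<in>tarski_instances k.
        \<integral>\<^sup>+ T. of_nat (run_queries T f) \<partial>(measure_pmf A))"

end

theory Submission
  imports Defs
begin

text \<open>Upper bound: the Kleene iterates of f from the bottom form an increasing chain that gains
  a True bit at every step until it becomes stationary, so the k-th iterate is a fixed point,
  found with k queries; deterministic algorithms are special randomized ones.

  Lower bound: for every b there is a monotone instance with unique fixed point b whose answer
  to a query x reveals only the common prefix of x and b. Weighting a subcube of dimension n
  by 3^t (3/2)^n shows that a decision tree solves at most 3^t (3/2)^k of these 2^k instances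
  within t queries, which is at most 3/4 of them for t = k div 5. An algorithm that succeeds
  with probability 9/10 on every instance therefore exceeds t queries with average probability
  at least 9/10 - 3/4 over the hard instances, so its expected cost on one of them is at least
  (t + 1) 3/20 \<ge> 3k/100.\<close>

lemma leq_cw_Cons [simp]: "leq_cw (a # x) (b # y) \<longleftrightarrow> a \<le> b \<and> leq_cw x y"
  by (simp add: leq_cw_def)

lemma leq_cw_replicate_False: "length x = n \<Longrightarrow> leq_cw (replicate n False) x"
  by (induction x arbitrary: n) (auto simp: leq_cw_def list_all2_Cons2)

lemma leq_cw_replicate_True: "length x = n \<Longrightarrow> leq_cw x (replicate n True)"
  by (induction x arbitrary: n) (auto simp: leq_cw_def list_all2_Cons1)

lemma finite_cube: "finite (cube n)"
  using finite_lists_length_eq[of "UNIV :: bool set" n] by (simp add: cube_def)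

lemma card_cube: "card (cube n) = 2 ^ n"
  using card_lists_length_eq[of "UNIV :: bool set" n] by (simp add: cube_def)

lemma card_cube_Suc_split:
  "card {u \<in> cube (Suc m). P u} = card {u \<in> cube m. P (d # u)} + card {u \<in> cube m. P ((\<not> d) # u)}"
proof -
  have "{u \<in> cube (Suc m). P u} =
      Cons d ` {u \<in> cube m. P (d # u)} \<union> Cons (\<not> d) ` {u \<in> cube m. P ((\<not> d) # u)}"
    (is "?L = ?R")
  proof
    show "?L \<subseteq> ?R"
    proof
      fix u assume "u \<in> ?L"
      then obtain c u' where "u = c # u'" "u' \<in> cube m" "P u"
        by (auto simp: cube_def length_Suc_conv)
      then show "u \<in> ?R"
        by (cases "c = d") auto
    qed
  qed (auto simp: cube_def)
  also have "card \<dots> = card {u \<in> cube m. P (d # u)} + card {u \<in> cube m. P ((\<not> d) # u)}"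
    by (subst card_Un_disjoint) (auto simp: card_image finite_cube)
  finally show ?thesis .
qed

lemma count_True_mono: "leq_cw a b \<Longrightarrow> count_list a True \<le> count_list b True"
  unfolding leq_cw_def by (induction rule: list_all2_induct) auto

lemma count_True_strict_mono:
  assumes "leq_cw a b" "a \<noteq> b"
  shows "count_list a True < count_list b True"
  using assms unfolding leq_cw_def
proof (induction rule: list_all2_induct)
  case (Cons x xs y ys)
  then show ?case
    using count_True_mono[of xs ys] by (cases x; cases y) (auto simp: leq_cw_def)
qed simp

lemma fixed_point_iterate_bottom:
  assumes "f \<in> tarski_instances k"
  shows "is_fixed_point k f ((f ^^ k) (replicate k False))"
proof -
  define x where "x j = (f ^^ j) (replicate k False)" for j
  have f_cube: "f y \<in> cube k" if "y \<in> cube k" for y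
    using assms that by (simp add: tarski_instances_def)
  have f_mono: "leq_cw (f a) (f b)" if "a \<in> cube k" "b \<in> cube k" "leq_cw a b" for a b
    using assms that by (simp add: tarski_instances_def)
  have x_Suc: "x (Suc j) = f (x j)" for j
    by (simp add: x_def)
  have x_cube: "x j \<in> cube k" for j
    by (induction j) (simp_all add: x_Suc f_cube, simp add: x_def cube_def)
  have x_chain: "leq_cw (x j) (x (Suc j))" for j
  proof (induction j)
    case 0
    show ?case using x_cube[of 1] by (simp add: x_def cube_def leq_cw_replicate_False)
  next
    case (Suc j)
    then show ?case using f_mono[OF x_cube x_cube Suc.IH] by (simp only: x_Suc)
  qed
  have progress: "j < count_list (x (Suc j)) True" if "x (Suc j) \<noteq> x j" for j
    using that
  proof (induction j)
    case 0
    have "count_list (x 0) True = 0"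
      by (simp add: x_def count_list_0_iff)
    with 0 show ?case
      using count_True_strict_mono[OF x_chain[of 0]] by fastforce
  next
    case (Suc j)
    then have "x (Suc j) \<noteq> x j"
      by (metis x_Suc)
    with Suc.IH have "Suc j \<le> count_list (x (Suc j)) True"
      by simp
    also have "\<dots> < count_list (x (Suc (Suc j))) True"
      using count_True_strict_mono[OF x_chain] Suc.prems by metis
    finally show ?case .
  qed
  have "count_list (x (Suc k)) True \<le> k"
    using count_le_length[of "x (Suc k)"] x_cube[of "Suc k"] by (simp add: cube_def)
  with progress[of k] have "f (x k) = x k"
    by (metis not_le x_Suc)
  with x_cube[of k] show ?thesis
    by (simp add: is_fixed_point_def x_def)
qed

primrec iterate_tree :: "nat \<Rightarrow> 'a \<Rightarrow> 'a qtree" where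
  "iterate_tree 0 x = Leaf x"
| "iterate_tree (Suc n) x = Query x (iterate_tree n)"

lemma run_iterate_tree:
  "run_output (iterate_tree n x) f = (f ^^ n) x" "run_queries (iterate_tree n x) f = n"
  by (induction n arbitrary: x) (simp_all add: funpow_swap1)

lemma det_query_complexity_le: "det_query_complexity k \<le> of_nat k"
proof -
  let ?T = "iterate_tree k (replicate k False)"
  have "det_correct k ?T"
    by (simp add: det_correct_def run_iterate_tree fixed_point_iterate_bottom)
  then have "det_query_complexity k \<le> (SUP f\<in>tarski_instances k. of_nat (run_queries ?T f))"
    unfolding det_query_complexity_def by (intro INF_lower) simp
  also have "\<dots> \<le> of_nat k"
    by (simp add: run_iterate_tree SUP_least)
  finally show ?thesis .
qed

lemma rand_query_complexity_le_det: "rand_query_complexity k \<le> det_query_complexity k"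
  unfolding det_query_complexity_def
proof (rule INF_greatest)
  fix T assume "T \<in> {T. det_correct k T}"
  then have "rand_correct k (return_pmf T)"
    by (simp add: rand_correct_def det_correct_def)
  then have "rand_query_complexity k \<le>
      (SUP f\<in>tarski_instances k. \<integral>\<^sup>+T'. of_nat (run_queries T' f) \<partial>measure_pmf (return_pmf T))"
    unfolding rand_query_complexity_def by (intro INF_lower) simp
  then show "rand_query_complexity k \<le> (SUP f\<in>tarski_instances k. of_nat (run_queries T f))"
    by simp
qed

text \<open>The answer to a query x copies b up to and including the first position where x and b
  differ and then repeats the bit of x found there, so it reveals only the common prefix of x
  and b. The second equation is junk: hard_instance leaves points of the wrong length fixed.\<close>
fun hard_map :: "bool list \<Rightarrow> bool list \<Rightarrow> bool list" where
  "hard_map [] x = []"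
| "hard_map (c # b) [] = c # replicate (length b) c"
| "hard_map (c # b) (y # x) = c # (if y = c then hard_map b x else replicate (length b) y)"

definition hard_instance :: "bool list \<Rightarrow> bool list \<Rightarrow> bool list" where
  "hard_instance b x = (if length x = length b then hard_map b x else x)"

lemma length_hard_map [simp]: "length (hard_map b x) = length b"
  by (induction b x rule: hard_map.induct) auto

lemma hard_map_mono:
  "length x = length b \<Longrightarrow> length y = length b \<Longrightarrow> leq_cw x y \<Longrightarrow> leq_cw (hard_map b x) (hard_map b y)"
proof (induction b arbitrary: x y)
  case (Cons c b)
  then obtain x1 x' y1 y' where "x = x1 # x'" "y = y1 # y'"
    by (metis length_Suc_conv)
  with Cons show ?case
    by (cases x1; cases y1; cases c) (auto simp: leq_cw_replicate_True leq_cw_replicate_False)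
qed (simp add: leq_cw_def)

lemma hard_map_fixed_iff: "length x = length b \<Longrightarrow> hard_map b x = x \<longleftrightarrow> x = b"
proof (induction b arbitrary: x)
  case (Cons c b)
  then obtain y x' where "x = y # x'"
    by (metis length_Suc_conv)
  with Cons show ?case
    by (cases "y = c") auto
qed simp

lemma hard_instance_tarski: "b \<in> cube k \<Longrightarrow> hard_instance b \<in> tarski_instances k"
  by (auto simp: tarski_instances_def cube_def hard_instance_def hard_map_mono)

lemma is_fixed_point_hard_instance_iff:
  "b \<in> cube k \<Longrightarrow> is_fixed_point k (hard_instance b) x \<longleftrightarrow> x = b"
  by (auto simp: is_fixed_point_def cube_def hard_instance_def hard_map_fixed_iff)

lemma hard_map_append: "hard_map (w @ u) (w @ v) = w @ hard_map u v"
  by (induction w) auto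

lemma hard_map_append_indep:
  "take (length w) v \<noteq> w \<Longrightarrow> length u = length u' \<Longrightarrow> hard_map (w @ u) v = hard_map (w @ u') v"
proof (induction w arbitrary: v)
  case (Cons c w)
  then show ?case
    by (cases v) auto
qed simp

lemma hard_instance_uniform_on_subcube:
  assumes "\<nexists>v'. v = w @ v' \<and> length v' = n"
  obtains a where "\<And>u. u \<in> cube n \<Longrightarrow> hard_instance (w @ u) v = a"
proof (cases "length v = length w + n")
  case True
  have "take (length w) v \<noteq> w"
  proof
    assume "take (length w) v = w"
    then have "v = w @ drop (length w) v"
      by (metis append_take_drop_id)
    moreover have "length (drop (length w) v) = n"
      using True by simp
    ultimately show False
      using assms by blast
  qed
  show ?thesis
  proof (rule that)
    fix u assume "u \<in> cube n"
    then show "hard_instance (w @ u) v = hard_map (w @ replicate n False) v"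
      using True hard_map_append_indep[OF \<open>take (length w) v \<noteq> w\<close>, of u "replicate n False"]
      by (simp add: hard_instance_def cube_def)
  qed
next
  case False
  then show ?thesis
    by (intro that[of v]) (simp add: hard_instance_def cube_def)
qed

definition solves_within :: "bool list qtree \<Rightarrow> nat \<Rightarrow> bool list \<Rightarrow> bool" where
  "solves_within T t b \<longleftrightarrow> run_output T (hard_instance b) = b \<and> run_queries T (hard_instance b) \<le> t"

lemma solves_within_Leaf: "solves_within (Leaf x) t b \<longleftrightarrow> b = x"
  by (auto simp: solves_within_def)

lemma solves_within_Query_0 [simp]: "\<not> solves_within (Query v s) 0 b"
  by (simp add: solves_within_def)

lemma solves_within_Query_Suc [simp]:
  "solves_within (Query v s) (Suc t) b \<longleftrightarrow> solves_within (s (hard_instance b v)) t b"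
  by (simp add: solves_within_def)

text \<open>A query point v in the subcube splits it, at the first disagreement with v, into the
  point v and subcubes of dimensions n-1, ..., 0 on each of which the answer is constant;
  summing the budgets gives 1 + 3^t \<Sum>i<n. (3/2)^i \<le> 3^t (2 (3/2)^n - 1).\<close>
lemma card_solves_within_Query_in_subcube:
  assumes IH: "\<And>a w n. real (card {u \<in> cube n. solves_within (s a) t (w @ u)}) \<le> 3 ^ t * (3/2) ^ n"
    and "w @ v' = v"
  shows "real (card {u \<in> cube (length v'). solves_within (Query v s) (Suc t) (w @ u)})
    \<le> 3 ^ t * (2 * (3/2) ^ length v' - 1)"
  using assms(2)
proof (induction v' arbitrary: w)
  case Nil
  have "card {u \<in> cube 0. solves_within (Query v s) (Suc t) (w @ u)} \<le> card {[] :: bool list}"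
    by (intro card_mono) (auto simp: cube_def)
  then have "real (card {u \<in> cube 0. solves_within (Query v s) (Suc t) (w @ u)}) \<le> 1"
    by simp
  also have "\<dots> \<le> 3 ^ t * (2 * (3/2) ^ length [] - 1)"
    by simp
  finally show ?case
    by simp
next
  case (Cons d v')
  let ?m = "length v'"
  let ?S = "\<lambda>u. solves_within (Query v s) (Suc t) (w @ u)"
  have "real (card {u \<in> cube ?m. ?S (d # u)}) \<le> 3 ^ t * (2 * (3/2) ^ ?m - 1)"
    using Cons.IH[of "w @ [d]"] Cons.prems by simp
  moreover have "real (card {u \<in> cube ?m. ?S ((\<not> d) # u)}) \<le> 3 ^ t * (3/2) ^ ?m"
  proof -
    have "hard_instance (w @ (\<not> d) # u) v = w @ (\<not> d) # replicate ?m d" if "u \<in> cube ?m" for u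
      using that Cons.prems[symmetric] hard_map_append[of w "(\<not> d) # u" "d # v'"]
      by (simp add: hard_instance_def cube_def)
    then have "{u \<in> cube ?m. ?S ((\<not> d) # u)} =
        {u \<in> cube ?m. solves_within (s (w @ (\<not> d) # replicate ?m d)) t ((w @ [\<not> d]) @ u)}"
      by auto
    moreover have "real (card {u \<in> cube ?m.
        solves_within (s (w @ (\<not> d) # replicate ?m d)) t ((w @ [\<not> d]) @ u)}) \<le> 3 ^ t * (3/2) ^ ?m"
      by (rule IH)
    ultimately show ?thesis
      by simp
  qed
  ultimately show ?case
    by (simp add: card_cube_Suc_split[where d = d] algebra_simps)
qed

lemma card_solves_within:
  "real (card {u \<in> cube n. solves_within T t (w @ u)}) \<le> 3 ^ t * (3/2) ^ n"
proof (induction T arbitrary: w n t)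
  case (Leaf x)
  have "card {u \<in> cube n. solves_within (Leaf x) t (w @ u)} \<le> card {drop (length w) x}"
    by (intro card_mono) (auto simp: solves_within_Leaf)
  then have "real (card {u \<in> cube n. solves_within (Leaf x) t (w @ u)}) \<le> 1"
    by simp
  also have "1 \<le> (3::real) ^ t * (3/2) ^ n"
    using mult_mono[of 1 "(3::real) ^ t" 1 "(3/2) ^ n"] by simp
  finally show ?case .
next
  case (Query v s)
  show ?case
  proof (cases t)
    case (Suc t')
    have IH: "real (card {u \<in> cube n. solves_within (s a) t' (w @ u)}) \<le> 3 ^ t' * (3/2) ^ n"
      for a w n
      using Query.IH by blast
    show ?thesis
    proof (cases "\<exists>v'. v = w @ v' \<and> length v' = n")
      case True
      then obtain v' where "w @ v' = v" "length v' = n"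
        by auto
      with card_solves_within_Query_in_subcube[OF IH this(1)]
      have "real (card {u \<in> cube n. solves_within (Query v s) t (w @ u)})
          \<le> 3 ^ t' * (2 * (3/2) ^ n - 1)"
        by (simp add: Suc)
      also have "\<dots> \<le> 3 ^ t * (3/2) ^ n"
        by (simp add: Suc algebra_simps)
      finally show ?thesis .
    next
      case False
      obtain a where "\<And>u. u \<in> cube n \<Longrightarrow> hard_instance (w @ u) v = a"
        using hard_instance_uniform_on_subcube[OF False] by blast
      then have "{u \<in> cube n. solves_within (Query v s) t (w @ u)} =
          {u \<in> cube n. solves_within (s a) t' (w @ u)}"
        by (auto simp: Suc)
      then have "real (card {u \<in> cube n. solves_within (Query v s) t (w @ u)})
          = real (card {u \<in> cube n. solves_within (s a) t' (w @ u)})"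
        by simp
      also have "\<dots> \<le> 3 ^ t' * (3/2) ^ n"
        by (rule IH)
      also have "\<dots> \<le> 3 ^ t * (3/2) ^ n"
        by (simp add: Suc)
      finally show ?thesis .
    qed
  qed simp
qed

text \<open>The easy direction of Yao's principle; costs are truncated at t + 1 so that all
  expectations are finite.\<close>
lemma exists_input_with_large_truncated_cost:
  fixes A :: "'t pmf" and cost :: "'t \<Rightarrow> 'b \<Rightarrow> nat" and p q :: real
  assumes "finite B" "B \<noteq> {}"
    and success: "\<And>b. b \<in> B \<Longrightarrow> p \<le> measure_pmf.prob A {T. success T b}"
    and few_fast: "\<And>T. real (card {b \<in> B. success T b \<and> cost T b \<le> t}) \<le> q * card B"
  shows "\<exists>b\<in>B. Suc t * (p - q) \<le> measure_pmf.expectation A (\<lambda>T. real (min (cost T b) (Suc t)))"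
proof -
  define m where "m b T = real (min (cost T b) (Suc t))" for b T
  define succ where "succ b = (indicator {T. success T b} :: 't \<Rightarrow> real)" for b
  have integrable_m: "integrable A (m b)" for b
    by (rule measure_pmf.integrable_const_bound[where B = "Suc t"]) (auto simp: m_def)
  have integrable_succ: "integrable A (succ b)" for b
    by (rule measure_pmf.integrable_const_bound[where B = 1]) (auto simp: succ_def)
  have pointwise: "Suc t * (\<Sum>b\<in>B. succ b T) \<le> (\<Sum>b\<in>B. m b T) + Suc t * q * card B" for T
  proof -
    let ?fast = "\<lambda>b. of_bool (success T b \<and> cost T b \<le> t) :: real"
    have "(\<Sum>b\<in>B. Suc t * succ b T) \<le> (\<Sum>b\<in>B. m b T + Suc t * ?fast b)"
      by (intro sum_mono) (auto simp: m_def succ_def)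
    also have "\<dots> = (\<Sum>b\<in>B. m b T) + Suc t * real (card {b \<in> B. success T b \<and> cost T b \<le> t})"
      using \<open>finite B\<close> by (simp add: sum.distrib sum_distrib_left[symmetric] sum_of_bool_eq Int_def)
    also have "\<dots> \<le> (\<Sum>b\<in>B. m b T) + Suc t * (q * card B)"
      using few_fast[of T] by (intro add_left_mono mult_left_mono) simp_all
    finally show ?thesis
      by (simp add: sum_distrib_left mult.assoc)
  qed
  have "card B * p \<le> (\<Sum>b\<in>B. measure_pmf.prob A {T. success T b})"
    using sum_mono[of B "\<lambda>_. p", OF success] by simp
  then have "Suc t * (card B * p) \<le> Suc t * (\<Sum>b\<in>B. measure_pmf.prob A {T. success T b})"
    by (rule mult_left_mono) simp
  also have "\<dots> = measure_pmf.expectation A (\<lambda>T. Suc t * (\<Sum>b\<in>B. succ b T))"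
    by (simp add: integral_sum integrable_succ) (simp add: succ_def)
  also have "\<dots> \<le> measure_pmf.expectation A (\<lambda>T. (\<Sum>b\<in>B. m b T) + Suc t * q * card B)"
    by (intro integral_mono pointwise) (simp_all add: integrable_succ integrable_m)
  also have "\<dots> = (\<Sum>b\<in>B. measure_pmf.expectation A (m b)) + Suc t * q * card B"
    by (simp add: integrable_m)
  finally have average: "card B * (Suc t * (p - q)) \<le> (\<Sum>b\<in>B. measure_pmf.expectation A (m b))"
    by (simp add: algebra_simps)
  show ?thesis
  proof (rule ccontr)
    assume "\<not> ?thesis"
    then have "measure_pmf.expectation A (m b) < Suc t * (p - q)" if "b \<in> B" for b
      using that by (auto simp: m_def[abs_def] not_le)
    then have "(\<Sum>b\<in>B. measure_pmf.expectation A (m b)) < (\<Sum>b\<in>B. Suc t * (p - q))"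
      by (rule sum_strict_mono[OF \<open>finite B\<close> \<open>B \<noteq> {}\<close>])
    with average show False
      by simp
  qed
qed

lemma SUP_expected_cost_ge:
  fixes A :: "'t pmf" and cost :: "'t \<Rightarrow> 'b \<Rightarrow> nat" and p q :: real
  assumes "finite B" "B \<noteq> {}"
    and "\<And>b. b \<in> B \<Longrightarrow> p \<le> measure_pmf.prob A {T. success T b}"
    and "\<And>T. real (card {b \<in> B. success T b \<and> cost T b \<le> t}) \<le> q * card B"
  shows "ennreal (Suc t * (p - q)) \<le> (SUP b\<in>B. \<integral>\<^sup>+T. of_nat (cost T b) \<partial>measure_pmf A)"
proof -
  obtain b where "b \<in> B"
    and b: "Suc t * (p - q) \<le> measure_pmf.expectation A (\<lambda>T. real (min (cost T b) (Suc t)))"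
    using exists_input_with_large_truncated_cost[OF assms] by blast
  have "ennreal (Suc t * (p - q))
      \<le> ennreal (measure_pmf.expectation A (\<lambda>T. real (min (cost T b) (Suc t))))"
    using b by (rule ennreal_leI)
  also have "\<dots> = \<integral>\<^sup>+T. ennreal (real (min (cost T b) (Suc t))) \<partial>measure_pmf A"
    by (rule nn_integral_eq_integral[symmetric])
      (auto intro: measure_pmf.integrable_const_bound[where B = "Suc t"])
  also have "\<dots> \<le> \<integral>\<^sup>+T. of_nat (cost T b) \<partial>measure_pmf A"
    by (intro nn_integral_mono) (simp add: ennreal_of_nat_eq_real_of_nat ennreal_leI)
  also have "\<dots> \<le> (SUP b\<in>B. \<integral>\<^sup>+T. of_nat (cost T b) \<partial>measure_pmf A)"
    using \<open>b \<in> B\<close> by (rule SUP_upper)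
  finally show ?thesis .
qed

lemma three_pow_div_five_le:
  assumes "1 \<le> k"
  shows "(3::real) ^ (k div 5) * (3/2) ^ k \<le> 3/4 * 2 ^ k"
proof -
  define t where "t = k div 5"
  define r where "r = k mod 5"
  have k: "k = 5 * t + r"
    by (simp add: t_def r_def)
  have "(3/2::real) ^ k = ((3/4) ^ 5) ^ t * (3/4) ^ r * 2 ^ k"
    unfolding power_mult[symmetric] power_add[symmetric] k[symmetric] power_mult_distrib[symmetric]
    by simp
  then have "(3::real) ^ t * (3/2) ^ k = (3 * (3/4) ^ 5) ^ t * (3/4) ^ r * 2 ^ k"
    by (simp add: power_mult_distrib)
  also have "\<dots> \<le> (3/4) ^ t * (3/4) ^ r * 2 ^ k"
    by (intro mult_right_mono power_mono) (simp_all add: power_divide)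
  also have "\<dots> = (3/4) ^ (t + r) * 2 ^ k"
    by (simp add: power_add)
  also have "\<dots> \<le> (3/4) ^ 1 * 2 ^ k"
    using assms k by (intro mult_right_mono power_decreasing) auto
  finally show ?thesis
    by (simp add: t_def)
qed

lemma card_solves_within_cube_le:
  "1 \<le> k \<Longrightarrow> real (card {b \<in> cube k. solves_within T (k div 5) b}) \<le> 3/4 * card (cube k)"
  using card_solves_within[of k T "k div 5" "[]"] three_pow_div_five_le[of k]
  by (simp add: card_cube)

lemma rand_query_complexity_ge: "ennreal (3/100 * real k) \<le> rand_query_complexity k"
proof (cases "k = 0")
  case False
  show ?thesis
    unfolding rand_query_complexity_def
  proof (rule INF_greatest)
    fix A assume "A \<in> {A. rand_correct k A}"
    then have correct: "9/10 \<le> measure_pmf.prob A {T. run_output T (hard_instance b) = b}"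
      if "b \<in> cube k" for b
      using hard_instance_tarski[OF that] is_fixed_point_hard_instance_iff[OF that]
      by (auto simp: rand_correct_def)
    have "real k < real (5 * Suc (k div 5))"
      by (simp only: of_nat_less_iff) simp
    then have "3/100 * real k \<le> Suc (k div 5) * (9/10 - 3/4 :: real)"
      by simp
    then have "ennreal (3/100 * real k) \<le> ennreal (Suc (k div 5) * (9/10 - 3/4))"
      by (rule ennreal_leI)
    also have "\<dots> \<le> (SUP b\<in>cube k. \<integral>\<^sup>+T. of_nat (run_queries T (hard_instance b)) \<partial>measure_pmf A)"
    proof (rule SUP_expected_cost_ge)
      show "cube k \<noteq> {}"
        by (auto simp: cube_def intro: exI[of _ "replicate k False"])
      show "real (card {b \<in> cube k.
          run_output T (hard_instance b) = b \<and> run_queries T (hard_instance b) \<le> k div 5})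
          \<le> 3/4 * real (card (cube k))" for T
        using card_solves_within_cube_le[of k T] False by (simp add: solves_within_def)
    qed (use correct finite_cube in auto)
    also have "\<dots> \<le> (SUP f\<in>tarski_instances k. \<integral>\<^sup>+T. of_nat (run_queries T f) \<partial>measure_pmf A)"
      by (auto intro!: SUP_mono hard_instance_tarski)
    finally show "ennreal (3/100 * real k)
        \<le> (SUP f\<in>tarski_instances k. \<integral>\<^sup>+T. of_nat (run_queries T f) \<partial>measure_pmf A)" .
  qed
qed simp

theorem corollary2:
  shows "\<exists>c1 c2 :: real. 0 < c1 \<and> c1 \<le> c2 \<and>
    (\<forall>k::nat.
       ennreal (c1 * real k) \<le> rand_query_complexity k \<and>
       rand_query_complexity k \<le> ennreal (c2 * real k) \<and>
       ennreal (c1 * real k) \<le> det_query_complexity k \<and>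
       det_query_complexity k \<le> ennreal (c2 * real k))"
proof (rule exI[of _ "3/100"], rule exI[of _ 1], intro conjI allI)
  fix k :: nat
  have det_le: "det_query_complexity k \<le> ennreal (1 * real k)"
    using det_query_complexity_le[of k] by (simp add: ennreal_of_nat_eq_real_of_nat)
  show "ennreal (3/100 * real k) \<le> rand_query_complexity k"
    by (rule rand_query_complexity_ge)
  show "rand_query_complexity k \<le> ennreal (1 * real k)"
    using rand_query_complexity_le_det det_le by (rule order_trans)
  show "ennreal (3/100 * real k) \<le> det_query_complexity k"
    using rand_query_complexity_ge rand_query_complexity_le_det by (rule order_trans)
  show "det_query_complexity k \<le> ennreal (1 * real k)"
    by (rule det_le)
qed simp_all

end
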